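(* Let $T$ be a tree on $n$ vertices with costs $c:V(T)\to\mathbb{R}_{>0}$ normalized so that $\max_{v\in V(T)}c(v)=1$. Let $\mathcal{T}$ be a subtree of $T$ and let $0<a<b$ be such that $c(v)\le b$ for all $v\in V(\mathcal{T})$ and $2a\ge b$. Assume that either $b\le 1/\log n$, or $c(v)>a$ for every $v\in V(\mathcal{T})$. Let $D$ be the ranking-based decision tree of $\mathcal{T}$. Then $\texttt{COST}_D(\mathcal{T},c)\le 2\cdot\texttt{OPT}(T,c)$.
   Context: Search model: a query to $v$ costs $c(v)$ and returns either that $v$ is the target $x$ or the component of $T-v$ containing $x$. A decision tree for a tree $T$ is (recursively) a rooted tree whose root is a vertex $v$ of $T$ and whose root subtrees are decision trees for the components of $T-v$, one per component. $\texttt{COST}_D(T,c)$ is the maximum over $x\in V(T)$ of the total cost of the vertices on the root-to-$x$ path in $D$; $\texttt{OPT}(T,c)$ is the minimum cost over all decision trees for $T$. A vertex ranking of a tree is a labeling $l$ of its vertices by positive integers such that whenever $u\ne v$ and $l(u)=l(v)$, some vertex $z$ on the path strictly between $u$ and $v$ has $l(z)>l(v)$. The ranking-based decision tree of a tree $\mathcal{T}$ is obtained from a vertex ranking of $\mathcal{T}$ using the minimum possible number of distinct labels: query the unique vertex $z$ with largest label as the root, and below it attach, recursively, the decision trees so obtained (with the restricted labeling) for each component of $\mathcal{T}-z$. Logarithms are base 2. *)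

theory Defs
  imports Complex_Main
begin

text \<open>Graphs: a symmetric irreflexive adjacency relation E on vertices; a vertex set S
  determines the induced subgraph.\<close>

definition is_path :: "('a \<Rightarrow> 'a \<Rightarrow> bool) \<Rightarrow> 'a set \<Rightarrow> 'a list \<Rightarrow> 'a \<Rightarrow> 'a \<Rightarrow> bool" where
  "is_path E S p u v \<longleftrightarrow> p \<noteq> [] \<and> hd p = u \<and> last p = v \<and> distinct p \<and> set p \<subseteq> S \<and>
     (\<forall>i. Suc i < length p \<longrightarrow> E (p ! i) (p ! Suc i))"

definition is_tree :: "('a \<Rightarrow> 'a \<Rightarrow> bool) \<Rightarrow> 'a set \<Rightarrow> bool" where
  "is_tree E S \<longleftrightarrow> finite S \<and> S \<noteq> {} \<and> (\<forall>u v. E u v \<longrightarrow> E v u) \<and> (\<forall>u. \<not> E u u) \<and>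
     (\<forall>u\<in>S. \<forall>v\<in>S. \<exists>!p. is_path E S p u v)"

definition comps :: "('a \<Rightarrow> 'a \<Rightarrow> bool) \<Rightarrow> 'a set \<Rightarrow> 'a set set" where
  "comps E S = {C. \<exists>x\<in>S. C = {y\<in>S. \<exists>p. is_path E S p x y}}"

datatype 'a dtree = DNode 'a "'a dtree list"

inductive is_dt :: "('a \<Rightarrow> 'a \<Rightarrow> bool) \<Rightarrow> 'a set \<Rightarrow> 'a dtree \<Rightarrow> bool" for E where
  "\<lbrakk> v \<in> S; distinct Cs; set Cs = comps E (S - {v}); list_all2 (is_dt E) Cs ts \<rbrakk>
     \<Longrightarrow> is_dt E S (DNode v ts)"

text \<open>Costs of the root-to-node paths in a decision tree (every vertex of T is exactly one node).\<close>
fun path_costs :: "('a \<Rightarrow> real) \<Rightarrow> 'a dtree \<Rightarrow> real set" where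
  "path_costs c (DNode v ts) = {c v} \<union> (\<Union>t\<in>set ts. (\<lambda>r. c v + r) ` path_costs c t)"

definition COST :: "'a dtree \<Rightarrow> ('a \<Rightarrow> real) \<Rightarrow> real" where
  "COST D c = Max (path_costs c D)"

definition OPT :: "('a \<Rightarrow> 'a \<Rightarrow> bool) \<Rightarrow> 'a set \<Rightarrow> ('a \<Rightarrow> real) \<Rightarrow> real" where
  "OPT E S c = Inf {COST D c | D. is_dt E S D}"

definition vertex_ranking :: "('a \<Rightarrow> 'a \<Rightarrow> bool) \<Rightarrow> 'a set \<Rightarrow> ('a \<Rightarrow> nat) \<Rightarrow> bool" where
  "vertex_ranking E S l \<longleftrightarrow> (\<forall>v\<in>S. l v \<ge> 1) \<and>
     (\<forall>u\<in>S. \<forall>v\<in>S. u \<noteq> v \<and> l u = l v \<longrightarrow>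
        (\<exists>p z. is_path E S p u v \<and> z \<in> set p \<and> z \<noteq> u \<and> z \<noteq> v \<and> l z > l v))"

definition optimal_ranking :: "('a \<Rightarrow> 'a \<Rightarrow> bool) \<Rightarrow> 'a set \<Rightarrow> ('a \<Rightarrow> nat) \<Rightarrow> bool" where
  "optimal_ranking E S l \<longleftrightarrow> vertex_ranking E S l \<and>
     (\<forall>l'. vertex_ranking E S l' \<longrightarrow> card (l ` S) \<le> card (l' ` S))"

inductive rank_dt :: "('a \<Rightarrow> 'a \<Rightarrow> bool) \<Rightarrow> ('a \<Rightarrow> nat) \<Rightarrow> 'a set \<Rightarrow> 'a dtree \<Rightarrow> bool" for E l where
  "\<lbrakk> z \<in> S; \<forall>y\<in>S. y \<noteq> z \<longrightarrow> l y < l z; distinct Cs; set Cs = comps E (S - {z});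
     list_all2 (rank_dt E l) Cs ts \<rbrakk>
     \<Longrightarrow> rank_dt E l S (DNode z ts)"

end

theory Submission
  imports Defs "HOL-Library.Log_Nat"
begin

text \<open>
  The ranking-based decision tree queries at most one vertex per label on every branch, so its
  cost is at most \<open>b k\<close>, where \<open>k\<close> is the number of labels of an optimal ranking of
  \<open>\<T>\<close>. If all costs on \<open>\<T>\<close> exceed \<open>a\<close>, then every decision tree for \<open>T\<close> has a
  branch querying at least \<open>k\<close> vertices of \<open>\<T>\<close>: labelling each vertex of \<open>\<T>\<close> by the
  largest number of \<open>\<T>\<close>-vertices on a branch starting at its query yields a ranking of
  \<open>\<T>\<close>. Hence \<open>OPT \<ge> k a \<ge> k b / 2\<close>. Otherwise \<open>b \<le> 1 / log n\<close>, and splitting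
  \<open>\<T>\<close> recursively at centroids ranks it with at most \<open>log n + 1 \<le> 2 log n\<close> labels, so
  \<open>b k \<le> 2\<close>, while already the vertex of cost 1 forces \<open>OPT \<ge> 1\<close>.
\<close>

section \<open>Paths and connected components\<close>

lemma is_path_Cons:
  "is_path E S (a # p) u v \<longleftrightarrow> a = u \<and> a \<in> S \<and> (p = [] \<longrightarrow> a = v) \<and>
     (p \<noteq> [] \<longrightarrow> E a (hd p) \<and> a \<notin> set p \<and> is_path E S p (hd p) v)"
proof (cases p)
  case (Cons b q)
  have "(\<forall>i. Suc i < length (a # p) \<longrightarrow> E ((a # p) ! i) ((a # p) ! Suc i)) \<longleftrightarrow>
    E a b \<and> (\<forall>i. Suc i < length p \<longrightarrow> E (p ! i) (p ! Suc i))"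
    using Cons by (auto simp: less_Suc_eq_0_disj)
  then show ?thesis using Cons by (auto simp: is_path_def)
qed (auto simp: is_path_def)

lemma is_path_Nil [simp]: "\<not> is_path E S [] u v"
  by (simp add: is_path_def)

lemma is_path_set: "is_path E S p u v \<Longrightarrow> u \<in> set p \<and> v \<in> set p \<and> set p \<subseteq> S"
  by (auto simp: is_path_def)

lemma is_path_restrict: "is_path E S p u v \<Longrightarrow> set p \<subseteq> S' \<Longrightarrow> is_path E S' p u v"
  by (auto simp: is_path_def)

lemma is_path_mono: "is_path E S p u v \<Longrightarrow> S \<subseteq> S' \<Longrightarrow> is_path E S' p u v"
  by (auto simp: is_path_def)

lemma is_path_suffix:
  "is_path E S p u v \<Longrightarrow> x \<in> set p \<Longrightarrow> \<exists>q. is_path E S q x v \<and> set q \<subseteq> set p"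
proof (induction p arbitrary: u)
  case (Cons a p)
  show ?case
  proof (cases "x = a")
    case True
    then show ?thesis using Cons.prems(1) by (intro exI[of _ "a # p"]) (auto simp: is_path_Cons)
  next
    case False
    then have "is_path E S p (hd p) v" "x \<in> set p" using Cons.prems by (auto simp: is_path_Cons)
    then show ?thesis using Cons.IH by fastforce
  qed
qed simp

lemma is_path_prefix:
  "is_path E S p u v \<Longrightarrow> x \<in> set p \<Longrightarrow>
    \<exists>q. is_path E S q u x \<and> set q \<subseteq> set p \<and> (x \<noteq> v \<longrightarrow> v \<notin> set q)"
proof (induction p arbitrary: u)
  case (Cons a p)
  show ?case
  proof (cases "x = a")
    case True
    then show ?thesis using Cons.prems by (intro exI[of _ "[a]"]) (auto simp: is_path_Cons)
  next
    case False
    then have p: "is_path E S p (hd p) v" "x \<in> set p" "a = u" "a \<in> S" "E a (hd p)" "a \<notin> set p"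
      using Cons.prems by (auto simp: is_path_Cons)
    then obtain q where q: "is_path E S q (hd p) x" "set q \<subseteq> set p" "x \<noteq> v \<longrightarrow> v \<notin> set q"
      using Cons.IH by blast
    have "q \<noteq> []" "hd q = hd p" "a \<noteq> v"
      using q(1) p(1,6) is_path_set by (fastforce simp: is_path_def)+
    then have "is_path E S (a # q) u x" using q p by (auto simp: is_path_Cons)
    then show ?thesis using q \<open>a \<noteq> v\<close> by (intro exI[of _ "a # q"]) auto
  qed
qed simp

lemma is_path_snoc:
  "is_path E S q x y \<Longrightarrow> z \<notin> set q \<Longrightarrow> z \<in> S \<Longrightarrow> E y z \<Longrightarrow> is_path E S (q @ [z]) x z"
proof (induction q arbitrary: x)
  case (Cons a q)
  then show ?case by (cases "q = []") (auto simp: is_path_Cons)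
qed simp

definition connected_in :: "('a \<Rightarrow> 'a \<Rightarrow> bool) \<Rightarrow> 'a set \<Rightarrow> 'a \<Rightarrow> 'a \<Rightarrow> bool" where
  "connected_in E S x y \<longleftrightarrow> (\<exists>p. is_path E S p x y)"

text \<open>Paths are simple, so transitivity of connectivity is obtained through walks, that is, the
  reflexive transitive closure of the induced edge relation.\<close>

definition edge_in :: "('a \<Rightarrow> 'a \<Rightarrow> bool) \<Rightarrow> 'a set \<Rightarrow> 'a \<Rightarrow> 'a \<Rightarrow> bool" where
  "edge_in E S x y \<longleftrightarrow> E x y \<and> x \<in> S \<and> y \<in> S"

lemma rtranclp_edge_in_if_is_path: "is_path E S p u v \<Longrightarrow> (edge_in E S)\<^sup>*\<^sup>* u v"
proof (induction p arbitrary: u)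
  case (Cons a p)
  show ?case
  proof (cases "p = []")
    case False
    then have "edge_in E S u (hd p)" "(edge_in E S)\<^sup>*\<^sup>* (hd p) v"
      using Cons is_path_set by (fastforce simp: is_path_Cons edge_in_def)+
    then show ?thesis by (rule converse_rtranclp_into_rtranclp)
  qed (use Cons.prems in \<open>auto simp: is_path_Cons\<close>)
qed simp

lemma is_path_if_rtranclp_edge_in: "(edge_in E S)\<^sup>*\<^sup>* u v \<Longrightarrow> u \<in> S \<Longrightarrow> \<exists>p. is_path E S p u v"
proof (induction rule: converse_rtranclp_induct)
  case base
  then show ?case by (intro exI[of _ "[v]"]) (simp add: is_path_def)
next
  case (step x y)
  then obtain p where p: "is_path E S p y v" and xy: "E x y" "x \<in> S"
    by (auto simp: edge_in_def)
  show ?case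
  proof (cases "x \<in> set p")
    case True
    then show ?thesis using is_path_suffix[OF p] by blast
  next
    case False
    have "p \<noteq> []" "hd p = y" using p by (auto simp: is_path_def)
    then have "is_path E S (x # p) x v" using p xy False by (auto simp: is_path_Cons)
    then show ?thesis by blast
  qed
qed

lemma connected_in_iff_rtranclp: "connected_in E S u v \<longleftrightarrow> u \<in> S \<and> (edge_in E S)\<^sup>*\<^sup>* u v"
proof
  assume "connected_in E S u v"
  then obtain p where "is_path E S p u v" by (auto simp: connected_in_def)
  then show "u \<in> S \<and> (edge_in E S)\<^sup>*\<^sup>* u v"
    using is_path_set[of E S p u v] rtranclp_edge_in_if_is_path[of E S p u v] by auto
next
  assume "u \<in> S \<and> (edge_in E S)\<^sup>*\<^sup>* u v"
  then show "connected_in E S u v"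
    using is_path_if_rtranclp_edge_in[of E S u v] by (simp add: connected_in_def)
qed

lemma connected_in_refl: "x \<in> S \<Longrightarrow> connected_in E S x x"
  by (simp add: connected_in_iff_rtranclp)

lemma connected_in_trans: "connected_in E S x y \<Longrightarrow> connected_in E S y z \<Longrightarrow> connected_in E S x z"
  unfolding connected_in_iff_rtranclp using rtranclp_trans[of "edge_in E S" x y z] by simp

lemma connected_in_sym:
  assumes "\<forall>u v. E u v \<longrightarrow> E v u" and "connected_in E S x y"
  shows "connected_in E S y x"
proof -
  have sym: "symp (edge_in E S)" using assms(1) unfolding symp_def edge_in_def by blast
  obtain p where p: "is_path E S p x y" using assms(2) by (auto simp: connected_in_def)
  have "(edge_in E S)\<^sup>*\<^sup>* y x"
    using sympD[OF symp_rtranclp[OF sym] rtranclp_edge_in_if_is_path[OF p]] .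
  moreover have "y \<in> S" using is_path_set[OF p] by blast
  ultimately show ?thesis by (simp add: connected_in_iff_rtranclp)
qed

lemma connected_in_if_on_path: "is_path E S p u v \<Longrightarrow> x \<in> set p \<Longrightarrow> connected_in E S u x"
  unfolding connected_in_def using is_path_prefix[of E S p u v x] by blast

definition component :: "('a \<Rightarrow> 'a \<Rightarrow> bool) \<Rightarrow> 'a set \<Rightarrow> 'a \<Rightarrow> 'a set" where
  "component E S x = {y \<in> S. connected_in E S x y}"

lemma comps_eq_image_component: "comps E S = component E S ` S"
  unfolding comps_def component_def connected_in_def image_def by simp

lemma mem_component_iff: "y \<in> component E S x \<longleftrightarrow> connected_in E S x y"
  unfolding component_def connected_in_def using is_path_set by fast

lemma self_in_component: "x \<in> S \<Longrightarrow> x \<in> component E S x"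
  by (simp add: mem_component_iff connected_in_refl)

lemma component_in_comps: "x \<in> S \<Longrightarrow> component E S x \<in> comps E S"
  by (simp add: comps_eq_image_component)

lemma component_subset: "component E S x \<subseteq> S"
  by (auto simp: component_def)

lemma comps_subset: "C \<in> comps E S \<Longrightarrow> C \<subseteq> S"
  by (auto simp: comps_eq_image_component component_def)

lemma comps_eq_component:
  assumes "\<forall>u v. E u v \<longrightarrow> E v u" and "C \<in> comps E S" and "y \<in> C"
  shows "C = component E S y"
proof -
  obtain x where x: "C = component E S x" using assms(2) by (auto simp: comps_eq_image_component)
  then have "connected_in E S x y" "connected_in E S y x"
    using assms(3) connected_in_sym[OF assms(1)] by (auto simp: mem_component_iff)
  then show ?thesis unfolding x set_eq_iff mem_component_iff by (meson connected_in_trans)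
qed

lemma comps_eqI:
  assumes "\<forall>u v. E u v \<longrightarrow> E v u" "C \<in> comps E S" "C' \<in> comps E S" "x \<in> C" "x \<in> C'"
  shows "C = C'"
  using comps_eq_component[OF assms(1,2,4)] comps_eq_component[OF assms(1,3,5)] by simp

lemma finite_comps: "finite S \<Longrightarrow> finite (comps E S)"
  by (simp add: comps_eq_image_component)

lemma list_all2_set_left: "list_all2 P xs ys \<Longrightarrow> x \<in> set xs \<Longrightarrow> \<exists>y\<in>set ys. P x y"
  by (induction xs ys rule: list_all2_induct) auto

lemma list_all2_set_right: "list_all2 P xs ys \<Longrightarrow> y \<in> set ys \<Longrightarrow> \<exists>x\<in>set xs. P x y"
  by (induction xs ys rule: list_all2_induct) auto

section \<open>Costs of decision trees\<close>

lemma finite_path_costs: "finite (path_costs c D)"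
  by (induction D) auto

lemma le_COST: "r \<in> path_costs c D \<Longrightarrow> r \<le> COST D c"
  unfolding COST_def using finite_path_costs by (rule Max_ge)

lemma COST_in_path_costs: "COST D c \<in> path_costs c D"
  unfolding COST_def using finite_path_costs by (rule Max_in) (cases D, simp)

lemma COST_ge_root: "c v \<le> COST (DNode v ts) c"
  by (rule le_COST) simp

lemma COST_ge_child: "t \<in> set ts \<Longrightarrow> c v + COST t c \<le> COST (DNode v ts) c"
  by (rule le_COST) (use COST_in_path_costs in auto)

lemma COST_DNode_le:
  assumes "0 \<le> M" and "\<forall>t\<in>set ts. COST t c \<le> M"
  shows "COST (DNode v ts) c \<le> c v + M"
proof -
  have "r \<le> c v + M" if "r \<in> path_costs c (DNode v ts)" for r
  proof -
    from that consider "r = c v" | t r' where "t \<in> set ts" "r' \<in> path_costs c t" "r = c v + r'"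
      by auto
    then show ?thesis
    proof cases
      case 2
      then show ?thesis using le_COST[of r' c t] assms(2) by fastforce
    qed (use assms(1) in simp)
  qed
  then show ?thesis unfolding COST_def by (simp add: Max_le_iff finite_path_costs)
qed

lemma is_dt_exists: "finite S \<Longrightarrow> S \<noteq> {} \<Longrightarrow> \<exists>D. is_dt E S D"
proof (induction "card S" arbitrary: S rule: less_induct)
  case less
  obtain v where v: "v \<in> S" using less.prems(2) by blast
  have "\<forall>C\<in>comps E (S - {v}). \<exists>D. is_dt E C D"
  proof
    fix C assume C: "C \<in> comps E (S - {v})"
    obtain x where "x \<in> S - {v}" "C = component E (S - {v}) x"
      using C by (auto simp: comps_eq_image_component)
    then have "C \<noteq> {}" using self_in_component[of x "S - {v}" E] by auto
    moreover have "C \<subset> S" using comps_subset[OF C] v by blast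
    moreover have "finite C" using \<open>C \<subset> S\<close> less.prems(1) finite_subset by blast
    ultimately show "\<exists>D. is_dt E C D" using less.hyps psubset_card_mono[OF less.prems(1)] by blast
  qed
  then obtain DD where DD: "\<forall>C\<in>comps E (S - {v}). is_dt E C (DD C)" using bchoice by blast
  have "finite (comps E (S - {v}))" using less.prems(1) by (simp add: finite_comps)
  then obtain Cs where Cs: "set Cs = comps E (S - {v})" "distinct Cs"
    using finite_distinct_list by blast
  have "list_all2 (is_dt E) Cs (map DD Cs)"
    unfolding list_all2_conv_all_nth using DD Cs(1) by auto
  then show ?case using is_dt.intros[OF v Cs(2) Cs(1)] by blast
qed

lemma OPT_geI:
  assumes "finite S" "S \<noteq> {}" and "\<And>D. is_dt E S D \<Longrightarrow> x \<le> COST D c"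
  shows "x \<le> OPT E S c"
  unfolding OPT_def using is_dt_exists[OF assms(1,2)] assms(3) by (intro cInf_greatest) auto

lemma COST_ge_vertex_cost:
  "is_dt E S D \<Longrightarrow> \<forall>v\<in>S. 0 \<le> c v \<Longrightarrow> x \<in> S \<Longrightarrow> c x \<le> COST D c"
proof (induction arbitrary: x rule: is_dt.induct)
  case (1 v S Cs ts)
  show ?case
  proof (cases "x = v")
    case True
    then show ?thesis by (simp add: COST_ge_root)
  next
    case False
    with "1.prems"(2) have x: "x \<in> S - {v}" by blast
    define C where "C = component E (S - {v}) x"
    have "C \<in> set Cs" unfolding C_def "1.hyps"(3) using x by (rule component_in_comps)
    then obtain t where t: "t \<in> set ts"
      and IH: "(\<forall>w\<in>C. 0 \<le> c w) \<longrightarrow> (\<forall>y. y \<in> C \<longrightarrow> c y \<le> COST t c)"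
      using list_all2_set_left[OF "1.IH"] by blast
    have "x \<in> C" "C \<subseteq> S"
      unfolding C_def using self_in_component[OF x] component_subset[of E "S - {v}" x] by auto
    then have "c x \<le> COST t c" using IH "1.prems"(1) by auto
    also have "\<dots> \<le> c v + COST t c" using "1.prems"(1) "1.hyps"(1) by simp
    also have "\<dots> \<le> COST (DNode v ts) c" using t by (rule COST_ge_child)
    finally show ?thesis .
  qed
qed

lemma Max_cost_le_OPT:
  assumes "finite S" "S \<noteq> {}" "\<forall>v\<in>S. 0 \<le> c v"
  shows "Max (c ` S) \<le> OPT E S c"
proof (rule OPT_geI[OF assms(1,2)])
  fix D assume "is_dt E S D"
  then show "Max (c ` S) \<le> COST D c"
    using assms COST_ge_vertex_cost[of E S D c] by (simp add: Max_le_iff)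
qed

lemma COST_rank_dt_le:
  fixes b :: real
  shows "rank_dt E l S D \<Longrightarrow> finite S \<Longrightarrow> \<forall>v\<in>S. c v \<le> b \<Longrightarrow> 0 \<le> b \<Longrightarrow>
    COST D c \<le> b * card (l ` S)"
proof (induction rule: rank_dt.induct)
  case (1 z S Cs ts)
  have "COST t c \<le> b * (card (l ` S) - 1)" if t: "t \<in> set ts" for t
  proof -
    obtain C where C: "C \<in> set Cs"
      and IH: "finite C \<longrightarrow> (\<forall>v\<in>C. c v \<le> b) \<longrightarrow> 0 \<le> b \<longrightarrow> COST t c \<le> b * card (l ` C)"
      using list_all2_set_right[OF "1.IH" t] by blast
    have CS: "C \<subseteq> S - {z}" using comps_subset C "1.hyps"(4) by blast
    then have "finite C" "\<forall>v\<in>C. c v \<le> b" using "1.prems"(1,2) finite_subset[of C S] by auto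
    then have "COST t c \<le> b * card (l ` C)" using IH "1.prems"(3) by blast
    moreover have "card (l ` C) \<le> card (l ` S - {l z})"
      using CS "1.hyps"(2) "1.prems"(1) by (intro card_mono) auto
    then have "b * card (l ` C) \<le> b * (card (l ` S) - 1)"
      using "1.hyps"(1) "1.prems"(3) by (intro mult_left_mono) auto
    ultimately show ?thesis by linarith
  qed
  then have "COST (DNode z ts) c \<le> c z + b * (card (l ` S) - 1)"
    using "1.prems"(3) by (intro COST_DNode_le) auto
  moreover have "card (l ` S) \<ge> 1"
    using "1.hyps"(1) "1.prems"(1) by (auto simp: Suc_le_eq card_gt_0_iff)
  moreover have "c z \<le> b" using "1.prems"(2) "1.hyps"(1) by blast
  ultimately show ?case by (simp add: of_nat_diff algebra_simps)
qed

fun depth_in :: "'a set \<Rightarrow> 'a dtree \<Rightarrow> nat" where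
  "depth_in W (DNode v ts) = of_bool (v \<in> W) + Max (insert 0 (depth_in W ` set ts))"

lemma depth_in_le_COST:
  fixes a :: real
  shows "is_dt E S D \<Longrightarrow> \<forall>v\<in>S. 0 \<le> c v \<Longrightarrow> \<forall>v\<in>S \<inter> W. a \<le> c v \<Longrightarrow>
    a * depth_in W D \<le> COST D c"
proof (induction rule: is_dt.induct)
  case (1 v S Cs ts)
  define m where "m = Max (insert 0 (depth_in W ` set ts))"
  have root: "a * of_bool (v \<in> W) \<le> c v" using "1.prems" "1.hyps"(1) by auto
  show ?case
  proof (cases "m = 0")
    case True
    then show ?thesis using root COST_ge_root[of c v ts] by (simp add: m_def)
  next
    case False
    then obtain t where t: "t \<in> set ts" "depth_in W t = m"
      using Max_in[of "insert 0 (depth_in W ` set ts)"] unfolding m_def by auto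
    obtain C where C: "C \<in> set Cs"
      and IH: "(\<forall>v\<in>C. 0 \<le> c v) \<longrightarrow> (\<forall>v\<in>C \<inter> W. a \<le> c v) \<longrightarrow> a * depth_in W t \<le> COST t c"
      using list_all2_set_right[OF "1.IH" t(1)] by blast
    have "C \<subseteq> S" using comps_subset C "1.hyps"(3) by blast
    then have "a * m \<le> COST t c" using IH "1.prems" t(2) by auto
    then have "a * depth_in W (DNode v ts) \<le> c v + COST t c"
      using root by (simp add: m_def[symmetric] algebra_simps)
    also have "\<dots> \<le> COST (DNode v ts) c" using t(1) by (rule COST_ge_child)
    finally show ?thesis .
  qed
qed

lemma optimal_ranking_card_le:
  assumes "optimal_ranking E U l" "vertex_ranking E U l'" "\<forall>x\<in>U. l' x \<le> m"
  shows "card (l ` U) \<le> m"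
proof -
  have "l' ` U \<subseteq> {1..m}" using assms(2,3) by (auto simp: vertex_ranking_def)
  then have "card (l' ` U) \<le> m" using card_mono[of "{1..m}" "l' ` U"] by simp
  then show ?thesis using assms(1,2) unfolding optimal_ranking_def by fastforce
qed

section \<open>Subtrees and centroids\<close>

locale tree_graph =
  fixes E :: "'a \<Rightarrow> 'a \<Rightarrow> bool" and V :: "'a set"
  assumes is_tree: "is_tree E V"
begin

lemma sym_edges: "\<forall>u v. E u v \<longrightarrow> E v u"
  using is_tree by (simp add: is_tree_def)

lemma finite_vertices: "finite V"
  using is_tree by (simp add: is_tree_def)

lemma vertices_nonempty: "V \<noteq> {}"
  using is_tree by (simp add: is_tree_def)

lemma path_unique: "u \<in> V \<Longrightarrow> v \<in> V \<Longrightarrow> is_path E V p u v \<Longrightarrow> is_path E V q u v \<Longrightarrow> p = q"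
  using is_tree unfolding is_tree_def by blast

lemma path_exists: "u \<in> V \<Longrightarrow> v \<in> V \<Longrightarrow> \<exists>p. is_path E V p u v"
  using is_tree unfolding is_tree_def by blast

text \<open>Subtrees are represented by path-closed vertex sets; unlike \<^const>\<open>is_tree\<close>, this property
  is inherited by the components left after deleting a vertex.\<close>

definition subtree :: "'a set \<Rightarrow> bool" where
  "subtree S \<longleftrightarrow> S \<subseteq> V \<and> (\<forall>u\<in>S. \<forall>v\<in>S. \<forall>p. is_path E V p u v \<longrightarrow> set p \<subseteq> S)"

lemma subtree_subset: "subtree S \<Longrightarrow> S \<subseteq> V"
  unfolding subtree_def by blast

lemma subtree_path: "subtree S \<Longrightarrow> u \<in> S \<Longrightarrow> v \<in> S \<Longrightarrow> is_path E V p u v \<Longrightarrow> set p \<subseteq> S"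
  unfolding subtree_def by blast

lemma subtree_vertices: "subtree V"
  unfolding subtree_def using is_path_set by fast

lemma subtree_if_is_tree:
  assumes "U \<subseteq> V" "is_tree E U"
  shows "subtree U"
  unfolding subtree_def
proof (intro conjI ballI allI impI)
  fix u v p assume uv: "u \<in> U" "v \<in> U" and p: "is_path E V p u v"
  obtain q where q: "is_path E U q u v" using assms(2) uv unfolding is_tree_def by blast
  then have "is_path E V q u v" using assms(1) by (rule is_path_mono)
  then have "p = q" using path_unique[OF _ _ p] uv assms(1) by auto
  then show "set p \<subseteq> U" using is_path_set[OF q] by simp
qed (rule assms(1))

lemma finite_subtree: "subtree S \<Longrightarrow> finite S"
  unfolding subtree_def using finite_vertices finite_subset by blast

lemma connected_in_if_path_avoids:
  assumes "subtree S" "u \<in> S" "v \<in> S" "is_path E V p u v" "w \<notin> set p"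
  shows "connected_in E (S - {w}) u v"
proof -
  have "set p \<subseteq> S - {w}" using subtree_path[OF assms(1-4)] assms(5) by auto
  then show ?thesis unfolding connected_in_def using is_path_restrict[OF assms(4)] by auto
qed

lemma subtree_component:
  assumes S: "subtree S" and C: "C \<in> comps E (S - {w})"
  shows "subtree C"
  unfolding subtree_def
proof (intro conjI ballI allI impI)
  show "C \<subseteq> V" using comps_subset[OF C] subtree_subset[OF S] by blast
  fix u v p assume uv: "u \<in> C" "v \<in> C" and p: "is_path E V p u v"
  have Cu: "C = component E (S - {w}) u" using comps_eq_component[OF sym_edges C uv(1)] .
  then obtain q where q: "is_path E (S - {w}) q u v"
    using uv(2) by (auto simp: mem_component_iff connected_in_def)
  have "is_path E V q u v" using is_path_mono[OF q] subtree_subset[OF S] by blast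
  then have "p = q" using path_unique[OF _ _ p] uv \<open>C \<subseteq> V\<close> by auto
  then show "set p \<subseteq> C"
    using connected_in_if_on_path[OF q] Cu by (auto simp: mem_component_iff)
qed


lemma neighbour_in_component:
  assumes S: "subtree S" and z: "z \<in> S" and C: "C \<in> comps E (S - {z})"
  shows "\<exists>y\<in>C. E z y"
proof -
  obtain x where x: "x \<in> S - {z}" "C = component E (S - {z}) x"
    using C by (auto simp: comps_eq_image_component)
  have "x \<in> V" "z \<in> V" using subtree_subset[OF S] x(1) z by auto
  then obtain p where p: "is_path E V p z x" using path_exists by blast
  have "set p \<subseteq> S" using subtree_path[OF S z _ p] x(1) by blast
  obtain p' where p': "p = z # p'" "p' \<noteq> []"
    using p x(1) by (cases p) (auto simp: is_path_Cons)
  define y where "y = hd p'"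
  have y: "E z y" "z \<notin> set p'" "is_path E V p' y x"
    using p p' unfolding y_def by (auto simp: is_path_Cons)
  have "set p' \<subseteq> S - {z}" using \<open>set p \<subseteq> S\<close> p'(1) y(2) by auto
  with y(3) have "is_path E (S - {z}) p' y x" by (rule is_path_restrict)
  then have "connected_in E (S - {z}) y x" unfolding connected_in_def by blast
  then have "y \<in> C" unfolding x(2) mem_component_iff by (rule connected_in_sym[OF sym_edges])
  then show ?thesis using y(1) by blast
qed

lemma components_at_edge_disjoint:
  assumes S: "subtree S" and yz: "y \<in> S" "z \<in> S" "E z y"
  shows "component E (S - {z}) y \<inter> component E (S - {y}) z = {}"
proof (rule ccontr)
  assume "\<not> ?thesis"
  then obtain x where "connected_in E (S - {z}) y x" "connected_in E (S - {y}) z x"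
    by (auto simp: mem_component_iff)
  then obtain q q' where q: "is_path E (S - {y}) q x z" and q': "is_path E (S - {z}) q' x y"
    using connected_in_sym[OF sym_edges] by (meson connected_in_def)
  have SV: "S \<subseteq> V" using S by (rule subtree_subset)
  have "is_path E V q' x y" "z \<notin> set q'" using is_path_mono[OF q'] is_path_set[OF q'] SV by auto
  moreover have "z \<in> V" "E y z" using yz SV sym_edges by auto
  ultimately have "is_path E V (q' @ [z]) x z" using is_path_snoc by metis
  moreover have "is_path E V q x z" "x \<in> V" using is_path_mono[OF q] is_path_set[OF q] SV by auto
  ultimately have "q = q' @ [z]" using path_unique[OF \<open>x \<in> V\<close> \<open>z \<in> V\<close>] by blast
  then show False using is_path_set[OF q] is_path_set[OF q'] by auto
qed

lemma components_cover:
  assumes S: "subtree S" and yz: "y \<in> S" "z \<in> S" "z \<noteq> y"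
  shows "S - {y} \<subseteq> component E (S - {y}) z \<union> component E (S - {z}) y"
proof
  fix x assume x: "x \<in> S - {y}"
  then obtain p where p: "is_path E V p x y" using path_exists subtree_subset[OF S] yz(1) by blast
  have pS: "set p \<subseteq> S" using subtree_path[OF S _ yz(1) p] x by blast
  show "x \<in> component E (S - {y}) z \<union> component E (S - {z}) y"
  proof (cases "z \<in> set p")
    case True
    then obtain q where q: "is_path E V q x z" "set q \<subseteq> set p" "y \<notin> set q"
      using is_path_prefix[OF p, of z] yz(3) by blast
    then have "set q \<subseteq> S - {y}" using pS by auto
    with q(1) have "connected_in E (S - {y}) x z" unfolding connected_in_def by (blast intro: is_path_restrict)
    then have "x \<in> component E (S - {y}) z"
      unfolding mem_component_iff by (rule connected_in_sym[OF sym_edges])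
    then show ?thesis by blast
  next
    case False
    then have "connected_in E (S - {z}) x y"
      using connected_in_if_path_avoids[OF S _ yz(1) p False] x by blast
    then have "x \<in> component E (S - {z}) y"
      unfolding mem_component_iff by (rule connected_in_sym[OF sym_edges])
    then show ?thesis by blast
  qed
qed

lemma components_shrink_across_edge:
  assumes S: "subtree S" and z: "z \<in> S" and C: "C \<in> comps E (S - {z})"
    and y: "y \<in> C" "E z y" and big: "card S < 2 * card C"
  shows "\<forall>C'\<in>comps E (S - {y}). card C' < card C"
proof
  fix C' assume C': "C' \<in> comps E (S - {y})"
  have fin: "finite S" using S by (rule finite_subtree)
  have Cy: "C = component E (S - {z}) y" using comps_eq_component[OF sym_edges C y(1)] .
  have yS: "y \<in> S" "y \<noteq> z" using comps_subset[OF C] y(1) by auto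
  have Cz: "component E (S - {y}) z \<in> comps E (S - {y})" "z \<in> component E (S - {y}) z"
    using z yS(2) by (simp_all add: component_in_comps self_in_component)
  show "card C' < card C"
  proof (cases "z \<in> C'")
    case True
    then have "C' = component E (S - {y}) z" using comps_eqI[OF sym_edges C' Cz(1) _ Cz(2)] by blast
    then have "C' \<subseteq> S - C"
      using components_at_edge_disjoint[OF S yS(1) z y(2)] comps_subset[OF C'] Cy by blast
    then have "card C' \<le> card (S - C)" using fin by (intro card_mono) auto
    also have "\<dots> = card S - card C"
      using comps_subset[OF C] fin by (intro card_Diff_subset) (auto intro: finite_subset)
    finally show ?thesis using big by linarith
  next
    case False
    then have "C' \<inter> component E (S - {y}) z = {}"
      using comps_eqI[OF sym_edges C' Cz(1)] Cz(2) by blast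
    then have "C' \<subseteq> C - {y}"
      using components_cover[OF S yS(1) z yS(2)[symmetric]] comps_subset[OF C'] Cy by blast
    moreover have "finite C" using comps_subset[OF C] fin finite_subset by blast
    ultimately show ?thesis using y(1) by (meson card_Diff1_less card_mono order.strict_trans1 finite_Diff)
  qed
qed

lemma centroid_exists:
  assumes S: "subtree S" and "S \<noteq> {}"
  shows "\<exists>w\<in>S. \<forall>C\<in>comps E (S - {w}). 2 * card C \<le> card S"
proof -
  \<comment> \<open>a vertex minimising the largest component size is a centroid\<close>
  define f where "f z = Max (insert 0 (card ` comps E (S - {z})))" for z
  have fin: "finite S" using S by (rule finite_subtree)
  obtain z where z: "z \<in> S" "\<forall>y. y \<in> S \<longrightarrow> f z \<le> f y"
    using ex_has_least_nat[of "\<lambda>z. z \<in> S" _ f] \<open>S \<noteq> {}\<close> by blast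
  show ?thesis
  proof (rule ccontr)
    assume "\<not> ?thesis"
    then obtain C where C: "C \<in> comps E (S - {z})" and big: "card S < 2 * card C"
      using z(1) by force
    obtain y where y: "y \<in> C" "E z y" using neighbour_in_component[OF S z(1) C] by blast
    have "y \<in> S" using comps_subset[OF C] y(1) by auto
    have "f y < card C"
      using components_shrink_across_edge[OF S z(1) C y big] finite_comps[of "S - {y}" E] fin big
      unfolding f_def by (simp add: Max_less_iff)
    moreover have "card C \<le> f z"
      unfolding f_def using finite_comps[of "S - {z}" E] fin C by (intro Max_ge) auto
    ultimately show False using z(2) \<open>y \<in> S\<close> by fastforce
  qed
qed

section \<open>Rankings from centroids and from decision trees\<close>

text \<open>The ranking condition with the separating paths taken in the whole tree, so that it makes
  sense for arbitrary vertex sets, such as the part of \<open>\<T>\<close> inside a subtree.\<close>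

definition ranked_on :: "'a set \<Rightarrow> ('a \<Rightarrow> nat) \<Rightarrow> bool" where
  "ranked_on W l \<longleftrightarrow> (\<forall>u\<in>W. \<forall>v\<in>W. u \<noteq> v \<and> l u = l v \<longrightarrow>
      (\<exists>p z. is_path E V p u v \<and> z \<in> set p \<and> z \<noteq> u \<and> z \<noteq> v \<and> l z > l v))"

definition glue_labels :: "'a set \<Rightarrow> 'a \<Rightarrow> ('a set \<Rightarrow> 'a \<Rightarrow> nat) \<Rightarrow> nat \<Rightarrow> 'a \<Rightarrow> nat" where
  "glue_labels S w L m x = (if x = w then Suc m else L (component E (S - {w}) x) x)"

lemma glue_labels_component:
  assumes "C \<in> comps E (S - {w})" "x \<in> C"
  shows "glue_labels S w L m x = L C x"
  using comps_subset[OF assms(1)] comps_eq_component[OF sym_edges assms] assms(2)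
  by (auto simp: glue_labels_def)

lemma glue_labels_bounds:
  assumes "\<forall>C\<in>comps E (S - {w}). \<forall>x\<in>C \<inter> W. 1 \<le> L C x \<and> L C x \<le> m"
    and "x \<in> S \<inter> W" "x \<noteq> w"
  shows "1 \<le> glue_labels S w L m x \<and> glue_labels S w L m x \<le> m"
proof -
  have "x \<in> S - {w}" using assms(2,3) by blast
  then have "component E (S - {w}) x \<in> comps E (S - {w})" "x \<in> component E (S - {w}) x"
    by (simp_all add: component_in_comps self_in_component)
  then show ?thesis using assms(1,2) glue_labels_component by fastforce
qed

lemma ranked_on_glue_labels:
  assumes S: "subtree S" and w: "w \<in> S"
    and L: "\<forall>C\<in>comps E (S - {w}). (\<forall>x\<in>C \<inter> W. 1 \<le> L C x \<and> L C x \<le> m) \<and> ranked_on (C \<inter> W) (L C)"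
  shows "ranked_on (S \<inter> W) (glue_labels S w L m)"
  unfolding ranked_on_def
proof (intro ballI impI)
  let ?l = "glue_labels S w L m"
  have bounds: "1 \<le> ?l x \<and> ?l x \<le> m" if "x \<in> S \<inter> W" "x \<noteq> w" for x
    using glue_labels_bounds[OF _ that] L by blast
  have lw: "?l w = Suc m" by (simp add: glue_labels_def)
  fix u v assume u: "u \<in> S \<inter> W" and v: "v \<in> S \<inter> W" and uv: "u \<noteq> v \<and> ?l u = ?l v"
  have "u \<noteq> w" "v \<noteq> w" using bounds[OF u] bounds[OF v] uv lw by (metis Suc_n_not_le_n)+
  define C where "C = component E (S - {w}) u"
  have C: "C \<in> comps E (S - {w})" "u \<in> C"
    using u \<open>u \<noteq> w\<close> by (simp_all add: C_def component_in_comps self_in_component)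
  note lC = glue_labels_component[OF C(1), of _ L m]
  show "\<exists>p z. is_path E V p u v \<and> z \<in> set p \<and> z \<noteq> u \<and> z \<noteq> v \<and> ?l z > ?l v"
  proof (cases "v \<in> C")
    case True
    have "ranked_on (C \<inter> W) (L C)" using L C(1) by blast
    then obtain p z where pz: "is_path E V p u v" "z \<in> set p" "z \<noteq> u" "z \<noteq> v" "L C z > L C v"
      using u v uv C(2) True lC unfolding ranked_on_def by fastforce
    have "z \<in> C" using subtree_path[OF subtree_component[OF S C(1)] C(2) True pz(1)] pz(2) by blast
    then have "?l z > ?l v" using pz(5) lC True by simp
    then show ?thesis using pz(1-4) by blast
  next
    case False
    obtain p where p: "is_path E V p u v"
      using u v subtree_subset[OF S] path_exists by blast
    have "w \<in> set p"
    proof (rule ccontr)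
      assume "w \<notin> set p"
      then have "connected_in E (S - {w}) u v"
        using connected_in_if_path_avoids[OF S _ _ p] u v by blast
      then show False using False by (simp add: C_def mem_component_iff)
    qed
    moreover have "?l v < ?l w" using bounds[OF v \<open>v \<noteq> w\<close>] lw by simp
    ultimately show ?thesis using p \<open>u \<noteq> w\<close> \<open>v \<noteq> w\<close> by blast
  qed
qed


lemma ranking_with_log_labels:
  "subtree S \<Longrightarrow> card S < 2 ^ K \<Longrightarrow> \<exists>l. (\<forall>x\<in>S. 1 \<le> l x \<and> l x \<le> K) \<and> ranked_on S l"
proof (induction K arbitrary: S)
  case 0
  then have "S = {}" using finite_subtree[OF "0.prems"(1)] by simp
  then show ?case by (simp add: ranked_on_def)
next
  case (Suc K)
  show ?case
  proof (cases "S = {}")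
    case True
    then show ?thesis by (simp add: ranked_on_def)
  next
    case False
    obtain w where w: "w \<in> S" "\<forall>C\<in>comps E (S - {w}). 2 * card C \<le> card S"
      using centroid_exists[OF Suc.prems(1) False] by blast
    have "\<forall>C\<in>comps E (S - {w}). \<exists>L. (\<forall>x\<in>C \<inter> S. 1 \<le> L x \<and> L x \<le> K) \<and> ranked_on (C \<inter> S) L"
    proof
      fix C assume C: "C \<in> comps E (S - {w})"
      have "2 * card C < 2 * 2 ^ K" using w(2) C Suc.prems(2) by fastforce
      then have "card C < 2 ^ K" by simp
      then obtain L where "(\<forall>x\<in>C. 1 \<le> L x \<and> L x \<le> K) \<and> ranked_on C L"
        using Suc.IH subtree_component[OF Suc.prems(1) C] by blast
      moreover have "C \<inter> S = C" using comps_subset[OF C] by blast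
      ultimately show "\<exists>L. (\<forall>x\<in>C \<inter> S. 1 \<le> L x \<and> L x \<le> K) \<and> ranked_on (C \<inter> S) L" by auto
    qed
    from bchoice[OF this] obtain L where L: "\<forall>C\<in>comps E (S - {w}).
        (\<forall>x\<in>C \<inter> S. 1 \<le> L C x \<and> L C x \<le> K) \<and> ranked_on (C \<inter> S) (L C)"
      by blast
    let ?l = "glue_labels S w L K"
    have "ranked_on S ?l" using ranked_on_glue_labels[OF Suc.prems(1) w(1) L] by simp
    moreover have "1 \<le> ?l x \<and> ?l x \<le> Suc K" if "x \<in> S" for x
      using glue_labels_bounds[of S w S L K x] L that by (cases "x = w") (auto simp: glue_labels_def)
    ultimately show ?thesis by blast
  qed
qed

lemma ranking_from_decision_tree:
  "is_dt E S D \<Longrightarrow> subtree S \<Longrightarrow>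
    \<exists>l. (\<forall>x\<in>S \<inter> W. 1 \<le> l x \<and> l x \<le> depth_in W D) \<and> ranked_on (S \<inter> W) l"
proof (induction rule: is_dt.induct)
  case (1 v S Cs ts)
  define m where "m = Max (insert 0 (depth_in W ` set ts))"
  have "\<forall>C\<in>comps E (S - {v}). \<exists>L. (\<forall>x\<in>C \<inter> W. 1 \<le> L x \<and> L x \<le> m) \<and> ranked_on (C \<inter> W) L"
  proof
    fix C assume "C \<in> comps E (S - {v})"
    then have C: "C \<in> set Cs" "subtree C"
      using "1.hyps"(3) subtree_component[OF "1.prems"] by auto
    then obtain t where t: "t \<in> set ts"
      and IH: "\<exists>L. (\<forall>x\<in>C \<inter> W. 1 \<le> L x \<and> L x \<le> depth_in W t) \<and> ranked_on (C \<inter> W) L"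
      using list_all2_set_left[OF "1.IH" C(1)] by blast
    have "depth_in W t \<le> m" unfolding m_def using t by (intro Max_ge) auto
    then show "\<exists>L. (\<forall>x\<in>C \<inter> W. 1 \<le> L x \<and> L x \<le> m) \<and> ranked_on (C \<inter> W) L"
      using IH order_trans by meson
  qed
  from bchoice[OF this] obtain L where L: "\<forall>C\<in>comps E (S - {v}).
      (\<forall>x\<in>C \<inter> W. 1 \<le> L C x \<and> L C x \<le> m) \<and> ranked_on (C \<inter> W) (L C)"
    by blast
  let ?l = "glue_labels S v L m"
  have "ranked_on (S \<inter> W) ?l" using ranked_on_glue_labels[OF "1.prems" "1.hyps"(1) L] .
  moreover have "1 \<le> ?l x \<and> ?l x \<le> depth_in W (DNode v ts)" if "x \<in> S \<inter> W" for x
    using glue_labels_bounds[of S v W L m x] L that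
    by (cases "x = v") (auto simp: glue_labels_def m_def)
  ultimately show ?case by blast
qed


lemma vertex_ranking_if_ranked_on:
  assumes U: "U \<subseteq> V" "is_tree E U" and l: "\<forall>x\<in>U. 1 \<le> l x" "ranked_on U l"
  shows "vertex_ranking E U l"
  unfolding vertex_ranking_def
proof (intro conjI ballI impI)
  fix u v assume uv: "u \<in> U" "v \<in> U" "u \<noteq> v \<and> l u = l v"
  then obtain p z where pz: "is_path E V p u v" "z \<in> set p" "z \<noteq> u" "z \<noteq> v" "l z > l v"
    using l(2) unfolding ranked_on_def by blast
  have "set p \<subseteq> U" using subtree_path[OF subtree_if_is_tree[OF U] uv(1,2) pz(1)] .
  with pz(1) have "is_path E U p u v" by (rule is_path_restrict)
  then show "\<exists>p z. is_path E U p u v \<and> z \<in> set p \<and> z \<noteq> u \<and> z \<noteq> v \<and> l z > l v"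
    using pz(2-5) by blast
qed (use l(1) in blast)

lemma optimal_ranking_card_le_depth_in:
  assumes U: "U \<subseteq> V" "is_tree E U" and l: "optimal_ranking E U l" and D: "is_dt E V D"
  shows "card (l ` U) \<le> depth_in U D"
proof -
  obtain l' where l': "\<forall>x\<in>U. 1 \<le> l' x \<and> l' x \<le> depth_in U D" "ranked_on U l'"
    using ranking_from_decision_tree[OF D subtree_vertices, of U] U(1) Int_absorb1[OF U(1)] by auto
  then have "vertex_ranking E U l'" using vertex_ranking_if_ranked_on[OF U] by blast
  then show ?thesis using optimal_ranking_card_le[OF l] l'(1) by blast
qed


lemma optimal_ranking_card_le_OPT:
  fixes a :: real
  assumes U: "U \<subseteq> V" "is_tree E U" and l: "optimal_ranking E U l"
    and c: "\<forall>v\<in>V. 0 \<le> c v" "\<forall>v\<in>U. a \<le> c v" and a: "0 \<le> a"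
  shows "a * card (l ` U) \<le> OPT E V c"
proof (rule OPT_geI[OF finite_vertices vertices_nonempty])
  fix D assume D: "is_dt E V D"
  have "real (card (l ` U)) \<le> depth_in U D" using optimal_ranking_card_le_depth_in[OF U l D] by simp
  then have "a * card (l ` U) \<le> a * depth_in U D" using a by (rule mult_left_mono)
  also have "\<dots> \<le> COST D c" using depth_in_le_COST[OF D c(1), of U a] c(2) by simp
  finally show "a * card (l ` U) \<le> COST D c" .
qed

lemma optimal_ranking_card_le_log:
  assumes U: "U \<subseteq> V" "is_tree E U" and l: "optimal_ranking E U l"
  shows "card (l ` U) \<le> log 2 (card V) + 1"
proof -
  define K where "K = floorlog 2 (card U)"
  have "card U > 0" using U(2) by (auto simp: is_tree_def card_gt_0_iff)
  then have "card U < 2 ^ K" using floorlog_bounds[of "card U" 2] by (simp add: K_def)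
  then obtain l' where l': "\<forall>x\<in>U. 1 \<le> l' x \<and> l' x \<le> K" "ranked_on U l'"
    using ranking_with_log_labels[OF subtree_if_is_tree[OF U]] by blast
  then have "card (l ` U) \<le> K"
    using optimal_ranking_card_le[OF l vertex_ranking_if_ranked_on[OF U]] by blast
  moreover have "real K \<le> log 2 (card U) + 1" using \<open>card U > 0\<close> by (simp add: K_def floorlog_def)
  moreover have "log 2 (card U) \<le> log 2 (card V)"
    using \<open>card U > 0\<close> card_mono[OF finite_vertices U(1)] by simp
  ultimately show ?thesis by linarith
qed

end

lemma one_le_log2_nat:
  assumes "0 < log 2 (real n)"
  shows "1 \<le> log 2 (real n)"
proof (cases "n = 0")
  case False
  then have "1 < n" using assms by simp
  then show ?thesis by simp
qed (use assms in \<open>simp add: log_def\<close>)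

theorem lemma9:
  fixes E :: "'a \<Rightarrow> 'a \<Rightarrow> bool" and V U :: "'a set" and c :: "'a \<Rightarrow> real"
    and a b :: real and l :: "'a \<Rightarrow> nat" and D :: "'a dtree"
  assumes tree: "is_tree E V"
    and cpos: "\<forall>v\<in>V. c v > 0"
    and cmax: "Max (c ` V) = 1"
    and sub: "U \<subseteq> V" "is_tree E U"
    and ab: "0 < a" "a < b" "b \<le> 2 * a"
    and cb: "\<forall>v\<in>U. c v \<le> b"
    and alt: "b \<le> 1 / log 2 (real (card V)) \<or> (\<forall>v\<in>U. c v > a)"
    and rk: "optimal_ranking E U l"
    and D: "rank_dt E l U D"
  shows "COST D c \<le> 2 * OPT E V c"
proof -
  interpret tree_graph E V using tree by (rule tree_graph.intro)
  have c0: "\<forall>v\<in>V. 0 \<le> c v" using cpos by (auto simp: le_less)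
  have "finite U" using sub(2) by (simp add: is_tree_def)
  then have cost: "COST D c \<le> b * card (l ` U)" using COST_rank_dt_le[OF D] cb ab by simp
  show ?thesis
  proof (cases "\<forall>v\<in>U. a < c v")
    case True
    then have "a * card (l ` U) \<le> OPT E V c"
      using optimal_ranking_card_le_OPT[OF sub rk c0] ab(1) by (auto simp: le_less)
    moreover have "b * card (l ` U) \<le> 2 * a * card (l ` U)" using ab by (simp add: mult_right_mono)
    ultimately show ?thesis using cost by linarith
  next
    case False
    then have b: "b \<le> 1 / log 2 (card V)" using alt by blast
    \<comment> \<open>as \<open>1 / log 2 1 = 1 / 0 = 0 < b\<close>, the tree has at least two vertices\<close>
    with ab have "0 < log 2 (card V)" by (smt (verit) zero_less_divide_1_iff)
    then have log: "1 \<le> log 2 (card V)" by (rule one_le_log2_nat)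
    then have "b * card (l ` U) \<le> b * (2 * log 2 (card V))"
      using optimal_ranking_card_le_log[OF sub rk] ab by (intro mult_left_mono) auto
    also have "\<dots> \<le> 2" using b log by (simp add: le_divide_eq)
    also have "\<dots> \<le> 2 * OPT E V c"
      using Max_cost_le_OPT[OF finite_vertices vertices_nonempty c0] cmax by simp
    finally show ?thesis using cost by linarith
  qed
qed

end
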